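(* Let $m,k$ be positive integers with $\gcd(k,m)=1$ and $m$ odd, and let $\pi(x)=x^{2^k+1}$ on $\mathbb{F}_{2^m}$. Then for all $(a_1,a_2),(b_1,b_2)\in\mathbb{F}_{2^m}\times\mathbb{F}_{2^m}$, the identities \[\pi(x)+\pi(x+a_2)+\pi(x+b_2)+\pi(x+a_2+b_2)=0,\qquad {\rm Tr}_1^m\bigl(a_1\pi(x+a_2)+b_1\pi(x+b_2)+(a_1+b_1)\pi(x+a_2+b_2)\bigr)=0\] hold for all $x\in\mathbb{F}_{2^m}$ if and only if one of the following holds: $(a_1,a_2)=(0,0)$, $(b_1,b_2)=(0,0)$, $(a_1,a_2)=(b_1,b_2)$, or $a_2=b_2=0$.
   Context: ${\rm Tr}_1^m$ denotes the absolute trace from $\mathbb{F}_{2^m}$ to $\mathbb{F}_2$. *)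

theory Defs
  imports Main
begin

text \<open>Absolute trace from GF(2^m) to GF(2), for a finite field of cardinality 2^m,
  as the usual sum of Frobenius conjugates (its value lies in the prime field {0,1}).\<close>
definition abs_trace :: "nat \<Rightarrow> 'a::field \<Rightarrow> 'a" where
  "abs_trace m x = (\<Sum>i<m. x ^ (2 ^ i))"

definition gold_pow :: "nat \<Rightarrow> 'a::field \<Rightarrow> 'a" where
  "gold_pow k x = x ^ (2 ^ k + 1)"

end

theory Submission
  imports Defs "HOL-Number_Theory.Residues"
begin

text \<open>
  Write \<open>q = 2^k\<close> and \<open>\<pi> = gold_pow k\<close>. In characteristic 2 the first identity
  says that the second derivative \<open>a\<^sub>2^q b\<^sub>2 + a\<^sub>2 b\<^sub>2^q\<close> of \<open>x^(q+1)\<close> vanishes; as \<open>gcd(k, m) = 1\<close>,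
  only \<open>0\<close> and \<open>1\<close> are fixed by \<open>x \<mapsto> x^q\<close>, which forces \<open>a\<^sub>2 = 0\<close>, \<open>b\<^sub>2 = 0\<close> or
  \<open>a\<^sub>2 = b\<^sub>2\<close>. In each of these cases the trace expression collapses to
  \<open>Tr(e (\<pi>(x) + \<pi>(x + b)))\<close> for one direction \<open>b\<close> and one coefficient \<open>e\<close>.
  For \<open>b \<noteq> 0\<close> this is \<open>Tr(e b x^q) + Tr(e b^q x) + Tr(u)\<close> with \<open>u = e b^(q+1)\<close>;
  moving the Frobenius across the trace and using nondegeneracy of the trace form
  gives \<open>e b = e^q b^(q\<^sup>2)\<close>, hence \<open>u^q = u\<close> and \<open>u \<in> {0, 1}\<close>. Since \<open>Tr(u) = 0\<close>
  (take \<open>x = 0\<close>) while \<open>Tr(1) = m = 1\<close> for odd \<open>m\<close>, we get \<open>u = 0\<close>, i.e. \<open>e = 0\<close>.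
\<close>

lemma CHAR_eq_2_if_card_UNIV_eq_power_2:
  assumes "card (UNIV :: 'a::{field,finite} set) = 2 ^ m"
  shows "CHAR('a) = 2"
proof -
  have "prime CHAR('a)"
    by (simp add: prime_CHAR_semidom finite_imp_CHAR_pos)
  moreover have "CHAR('a) dvd 2 ^ m"
    using CHAR_dvd_CARD[where 'a='a] assms by simp
  ultimately show ?thesis
    using prime_dvd_power primes_dvd_imp_eq two_is_prime_nat by blast
qed

lemma add_eq_0_iff_CHAR_2:
  assumes "CHAR('a::ring_1) = 2"
  shows "x + y = (0::'a) \<longleftrightarrow> x = y"
  using uminus_CHAR_2[OF assms, of y] by (metis eq_neg_iff_add_eq_0)

lemma add_self_CHAR_2:
  assumes "CHAR('a::ring_1) = 2"
  shows "x + x = (0::'a)"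
  by (simp add: add_eq_0_iff_CHAR_2[OF assms])

lemma add_power_2_power_CHAR_2:
  assumes "CHAR('a::comm_semiring_1) = 2"
  shows "(x + y :: 'a) ^ 2 ^ i = x ^ 2 ^ i + y ^ 2 ^ i"
  by (rule freshmans_dream') (simp_all add: assms)

lemma power_power_eq_self:
  fixes c :: "'a::monoid_mult"
  assumes "c ^ n = c"
  shows "c ^ (n ^ t) = c"
proof (induction t)
  case (Suc t)
  have "c ^ n ^ Suc t = (c ^ n) ^ n ^ t"
    by (simp add: power_mult mult.commute)
  then show ?case using Suc assms by simp
qed simp

lemma power_card_UNIV_eq_self:
  fixes x :: "'a::{field,finite}"
  shows "x ^ card (UNIV :: 'a set) = x"
proof (cases "x = 0")
  case False
  let ?U = "UNIV - {0::'a}"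
  have "(\<Prod>y\<in>?U. x * y) = (\<Prod>y\<in>?U. y)"
    by (rule prod.reindex_bij_witness[of _ "\<lambda>y. y / x" "\<lambda>y. x * y"]) (use False in auto)
  then have "x ^ (card (UNIV :: 'a set) - 1) = 1"
    by (simp add: prod.distrib card_Diff_singleton)
  then have "x ^ Suc (card (UNIV :: 'a set) - 1) = x"
    by simp
  then show ?thesis
    by (simp add: finite_UNIV_card_ge_0)
qed (simp add: finite_UNIV_card_ge_0)

lemma power_2_power_eq_self:
  fixes x :: "'a::{field,finite}"
  assumes "card (UNIV :: 'a set) = 2 ^ m"
  shows "x ^ 2 ^ (m * t) = x"
  using power_power_eq_self[OF power_card_UNIV_eq_self, of x t] assms
  by (simp add: power_mult)

lemma abs_trace_0: "abs_trace m (0::'a::field) = 0"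
  by (simp add: abs_trace_def power_0_left)

lemma abs_trace_add:
  assumes "CHAR('a::field) = 2"
  shows "abs_trace m (x + y :: 'a) = abs_trace m x + abs_trace m y"
  unfolding abs_trace_def by (simp add: add_power_2_power_CHAR_2[OF assms] sum.distrib)

lemma abs_trace_power2:
  fixes x :: "'a::{field,finite}"
  assumes "card (UNIV :: 'a set) = 2 ^ m"
  shows "abs_trace m (x ^ 2) = abs_trace m x"
proof -
  have "abs_trace m (x ^ 2) = (\<Sum>i<m. x ^ 2 ^ Suc i)"
    unfolding abs_trace_def by (simp add: power_mult[symmetric] mult.commute)
  also have "\<dots> = (\<Sum>i<Suc m. x ^ 2 ^ i) - x"
    by (subst sum.lessThan_Suc_shift) simp
  also have "\<dots> = abs_trace m x"
    unfolding abs_trace_def using power_2_power_eq_self[OF assms, of x 1] by simp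
  finally show ?thesis .
qed

lemma abs_trace_power_2_power:
  fixes x :: "'a::{field,finite}"
  assumes "card (UNIV :: 'a set) = 2 ^ m"
  shows "abs_trace m (x ^ 2 ^ j) = abs_trace m x"
proof (induction j)
  case (Suc j)
  have "x ^ 2 ^ Suc j = (x ^ 2 ^ j) ^ 2"
    by (simp add: power_mult[symmetric] mult.commute)
  then show ?case
    using abs_trace_power2[OF assms, of "x ^ 2 ^ j"] Suc by simp
qed simp

lemma abs_trace_1:
  assumes "CHAR('a::field) = 2" and "odd m"
  shows "abs_trace m (1::'a) = 1"
proof -
  obtain t where "m = Suc (2 * t)"
    using \<open>odd m\<close> oddE by fastforce
  moreover have "(2::'a) = 0"
    using of_nat_CHAR[where 'a='a] assms(1) by simp
  ultimately show ?thesis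
    unfolding abs_trace_def by simp
qed

lemma abs_trace_mult_eq_0_imp_eq_0:
  assumes "CHAR('a::field) = 2" and "odd m"
    and "\<And>x. abs_trace m (c * x :: 'a) = 0"
  shows "c = 0"
  using assms(3)[of "inverse c"] abs_trace_1[OF assms(1,2)] by (cases "c = 0") simp_all

lemma surj_power_2_power:
  assumes "CHAR('a::{field,finite}) = 2"
  shows "surj (\<lambda>x::'a. x ^ 2 ^ k)"
proof (rule finite_UNIV_inj_surj[OF finite_UNIV], rule injI)
  fix x y :: 'a
  assume "x ^ 2 ^ k = y ^ 2 ^ k"
  then have "(x + y) ^ 2 ^ k = 0"
    by (simp add: add_power_2_power_CHAR_2[OF assms] add_self_CHAR_2[OF assms])
  then show "x = y"
    by (simp add: add_eq_0_iff_CHAR_2[OF assms])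
qed

lemma power_2_power_eq_self_iff:
  fixes c :: "'a::{field,finite}"
  assumes "card (UNIV :: 'a set) = 2 ^ m" and "coprime k m" and "k > 0"
  shows "c ^ 2 ^ k = c \<longleftrightarrow> c = 0 \<or> c = 1"
proof
  assume fixed: "c ^ 2 ^ k = c"
  obtain s t where bezout: "k * s = m * t + 1"
    using bezout_nat[of k m] assms(2,3) by auto
  have "c ^ 2 = (c ^ 2 ^ (m * t)) ^ 2"
    using power_2_power_eq_self[OF assms(1)] by simp
  also have "\<dots> = c ^ 2 ^ (k * s)"
    by (simp add: bezout power_mult[symmetric] mult.commute)
  also have "\<dots> = c"
    using power_power_eq_self[OF fixed, of s] by (simp add: power_mult)
  finally have "c * (c - 1) = 0"
    by (simp add: power2_eq_square algebra_simps)
  then show "c = 0 \<or> c = 1"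
    by simp
qed auto

lemma gold_pow_derivative:
  assumes "CHAR('a::field) = 2"
  shows "gold_pow k x + gold_pow k (x + b) = b * x ^ 2 ^ k + b ^ 2 ^ k * x + gold_pow k (b::'a)"
proof -
  have "gold_pow k x + gold_pow k (x + b)
      = (x ^ 2 ^ k * x + x ^ 2 ^ k * x) + b * x ^ 2 ^ k + b ^ 2 ^ k * x + gold_pow k b"
    unfolding gold_pow_def by (simp add: add_power_2_power_CHAR_2[OF assms] algebra_simps)
  then show ?thesis
    by (simp add: add_self_CHAR_2[OF assms])
qed

lemma gold_pow_second_derivative:
  assumes "CHAR('a::field) = 2"
  shows "gold_pow k x + gold_pow k (x + a) + gold_pow k (x + b) + gold_pow k (x + a + b)
    = a ^ 2 ^ k * b + a * (b::'a) ^ 2 ^ k"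
proof -
  have "gold_pow k x + gold_pow k (x + a) + gold_pow k (x + b) + gold_pow k (x + a + b)
      = (gold_pow k x + gold_pow k (x + a)) + (gold_pow k (x + b) + gold_pow k (x + b + a))"
    by (simp add: ac_simps)
  also have "\<dots> = (a * x ^ 2 ^ k + a * x ^ 2 ^ k) + (a ^ 2 ^ k * x + a ^ 2 ^ k * x)
      + (gold_pow k a + gold_pow k a) + (a ^ 2 ^ k * b + a * b ^ 2 ^ k)"
    unfolding gold_pow_derivative[OF assms]
    by (simp add: add_power_2_power_CHAR_2[OF assms] algebra_simps)
  finally show ?thesis
    by (simp add: add_self_CHAR_2[OF assms])
qed

lemma power_2_power_mult_add_eq_0_iff:
  fixes a b :: "'a::{field,finite}"
  assumes "card (UNIV :: 'a set) = 2 ^ m" and "coprime k m" and "k > 0"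
  shows "a ^ 2 ^ k * b + a * b ^ 2 ^ k = 0 \<longleftrightarrow> a = 0 \<or> b = 0 \<or> a = b"
proof -
  have char: "CHAR('a) = 2"
    by (rule CHAR_eq_2_if_card_UNIV_eq_power_2[OF assms(1)])
  have "a ^ 2 ^ k * b = a * b ^ 2 ^ k \<longleftrightarrow> a = 0 \<or> b = 0 \<or> (b / a) ^ 2 ^ k = b / a"
    by (auto simp: power_divide divide_simps mult.commute)
  also have "\<dots> \<longleftrightarrow> a = 0 \<or> b = 0 \<or> a = b"
    using power_2_power_eq_self_iff[OF assms, of "b / a"] by auto
  finally show ?thesis
    by (simp add: add_eq_0_iff_CHAR_2[OF char])
qed

lemma abs_trace_gold_pow_derivative_eq_0_iff:
  fixes b e :: "'a::{field,finite}"
  assumes card: "card (UNIV :: 'a set) = 2 ^ m" and "coprime k m" and "k > 0" and "odd m"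
    and "b \<noteq> 0"
  shows "(\<forall>x. abs_trace m (e * (gold_pow k x + gold_pow k (x + b))) = 0) \<longleftrightarrow> e = 0"
proof
  assume vanish: "\<forall>x. abs_trace m (e * (gold_pow k x + gold_pow k (x + b))) = 0"
  have char: "CHAR('a) = 2"
    by (rule CHAR_eq_2_if_card_UNIV_eq_power_2[OF card])
  define q where "q = (2::nat) ^ k"
  define u where "u = e * gold_pow k b"
  have trace_sum: "abs_trace m (e * b * x ^ q) + abs_trace m (e * b ^ q * x) + abs_trace m u = 0"
    for x
    using vanish[rule_format, of x]
    by (simp add: gold_pow_derivative[OF char] abs_trace_add[OF char] distrib_left mult.assoc
        q_def u_def)
  have trace_u: "abs_trace m u = 0"
    using trace_sum[of 0] by (simp add: abs_trace_0 q_def power_0_left)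
  have "abs_trace m ((e * b + e ^ q * b ^ (q * q)) * x ^ q) = 0" for x
  proof -
    have "abs_trace m (e * b ^ q * x) = abs_trace m (e ^ q * b ^ (q * q) * x ^ q)"
      using abs_trace_power_2_power[OF card, of "e * b ^ q * x" k]
      by (simp add: q_def power_mult_distrib power_mult)
    then show ?thesis
      using trace_sum[of x] trace_u by (simp add: abs_trace_add[OF char] distrib_right)
  qed
  then have "abs_trace m ((e * b + e ^ q * b ^ (q * q)) * y) = 0" for y
    using surj_power_2_power[OF char, of k] unfolding q_def by (metis surjD)
  then have "e * b + e ^ q * b ^ (q * q) = 0"
    by (rule abs_trace_mult_eq_0_imp_eq_0[OF char \<open>odd m\<close>])
  then have "e ^ q * b ^ (q * q) = e * b"
    by (simp add: add_eq_0_iff_CHAR_2[OF char])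
  then have "u ^ 2 ^ k = u"
    by (simp add: u_def gold_pow_def q_def[symmetric] power_mult_distrib power_mult mult_ac)
  then have "u = 0 \<or> u = 1"
    using power_2_power_eq_self_iff[OF card \<open>coprime k m\<close> \<open>k > 0\<close>] by blast
  then have "u = 0"
    using trace_u abs_trace_1[OF char \<open>odd m\<close>] by auto
  then show "e = 0"
    using \<open>b \<noteq> 0\<close> by (simp add: u_def gold_pow_def)
qed (simp add: abs_trace_0)

lemma abs_trace_gold_pow_three_shifts_eq_0_iff:
  fixes a1 a2 b1 b2 :: "'a::{field,finite}"
  assumes card: "card (UNIV :: 'a set) = 2 ^ m" and "coprime k m" and "k > 0" and "odd m"
    and "a2 = 0 \<or> b2 = 0 \<or> a2 = b2"
  shows "(\<forall>x. abs_trace m (a1 * gold_pow k (x + a2) + b1 * gold_pow k (x + b2)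
            + (a1 + b1) * gold_pow k (x + a2 + b2)) = 0)
    \<longleftrightarrow> (a1, a2) = (0, 0) \<or> (b1, b2) = (0, 0) \<or> (a1, a2) = (b1, b2) \<or> (a2 = 0 \<and> b2 = 0)"
proof -
  have char: "CHAR('a) = 2"
    by (rule CHAR_eq_2_if_card_UNIV_eq_power_2[OF card])
  note derivative_eq_0_iff = abs_trace_gold_pow_derivative_eq_0_iff[OF assms(1-4)]
  note add_self = add_self_CHAR_2[OF char]
  consider "a2 = 0" "b2 = 0" | "a2 = 0" "b2 \<noteq> 0" | "a2 \<noteq> 0" "b2 = 0" | "a2 \<noteq> 0" "a2 = b2"
    using assms(5) by blast
  then show ?thesis
  proof cases
    case 1
    have "a1 * gold_pow k x + b1 * gold_pow k x + (a1 + b1) * gold_pow k x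
        = (a1 + b1) * gold_pow k x + (a1 + b1) * gold_pow k x" for x
      by (simp add: algebra_simps)
    with 1 show ?thesis
      by (simp add: add_self abs_trace_0)
  next
    case 2
    have "a1 * gold_pow k x + b1 * gold_pow k (x + b2) + (a1 + b1) * gold_pow k (x + b2)
        = a1 * (gold_pow k x + gold_pow k (x + b2))
          + (b1 * gold_pow k (x + b2) + b1 * gold_pow k (x + b2))" for x
      by (simp add: algebra_simps)
    with 2 show ?thesis
      using derivative_eq_0_iff[of b2 a1] by (simp add: add_self)
  next
    case 3
    have "a1 * gold_pow k (x + a2) + b1 * gold_pow k x + (a1 + b1) * gold_pow k (x + a2)
        = b1 * (gold_pow k x + gold_pow k (x + a2))
          + (a1 * gold_pow k (x + a2) + a1 * gold_pow k (x + a2))" for x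
      by (simp add: algebra_simps)
    with 3 show ?thesis
      using derivative_eq_0_iff[of a2 b1] by (simp add: add_self)
  next
    case 4
    have "x + a2 + a2 = x" for x
      by (simp add: add.assoc add_self)
    then have "a1 * gold_pow k (x + a2) + b1 * gold_pow k (x + a2)
        + (a1 + b1) * gold_pow k (x + a2 + a2) = (a1 + b1) * (gold_pow k x + gold_pow k (x + a2))" for x
      by (simp only:) (simp add: algebra_simps)
    with 4 show ?thesis
      using derivative_eq_0_iff[of a2 "a1 + b1"] by (simp add: add_eq_0_iff_CHAR_2[OF char])
  qed
qed

theorem lemma3p11:
  fixes m k :: nat and a1 a2 b1 b2 :: "'a::{field,finite}"
  assumes "card (UNIV :: 'a set) = 2 ^ m"
    and "m > 0" and "k > 0" and "gcd k m = 1" and "odd m"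
  shows "((\<forall>x::'a. gold_pow k x + gold_pow k (x + a2) + gold_pow k (x + b2)
                     + gold_pow k (x + a2 + b2) = 0)
          \<and> (\<forall>x::'a. abs_trace m (a1 * gold_pow k (x + a2) + b1 * gold_pow k (x + b2)
                     + (a1 + b1) * gold_pow k (x + a2 + b2)) = 0))
     \<longleftrightarrow> ((a1, a2) = (0, 0) \<or> (b1, b2) = (0, 0) \<or> (a1, a2) = (b1, b2)
          \<or> (a2 = 0 \<and> b2 = 0))"
proof -
  have char: "CHAR('a) = 2"
    by (rule CHAR_eq_2_if_card_UNIV_eq_power_2[OF assms(1)])
  have coprime: "coprime k m"
    using assms(4) by (simp add: coprime_iff_gcd_eq_1)
  have "(\<forall>x::'a. gold_pow k x + gold_pow k (x + a2) + gold_pow k (x + b2)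
                     + gold_pow k (x + a2 + b2) = 0) \<longleftrightarrow> a2 = 0 \<or> b2 = 0 \<or> a2 = b2"
    using power_2_power_mult_add_eq_0_iff[OF assms(1) coprime assms(3)]
    by (simp add: gold_pow_second_derivative[OF char])
  moreover have "(a1, a2) = (0, 0) \<or> (b1, b2) = (0, 0) \<or> (a1, a2) = (b1, b2) \<or> (a2 = 0 \<and> b2 = 0)
      \<Longrightarrow> a2 = 0 \<or> b2 = 0 \<or> a2 = b2"
    by auto
  ultimately show ?thesis
    using abs_trace_gold_pow_three_shifts_eq_0_iff[OF assms(1) coprime assms(3,5), of a2 b2 a1 b1]
    by argo
qed

end
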